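(* Let $\tilde{\mathbf M}_D,\tilde{\mathbf S}_D\in\mathbb R^{\tilde n\times\tilde n}$ be block-diagonal positive definite matrices, let $\tilde{\mathbf M}_F,\tilde{\mathbf S}_F\in\mathbb R^{\tilde n\times\tilde n}$ be arbitrary (coupling) matrices, and set $\tilde{\mathbf M}=\tilde{\mathbf M}_D+\tilde{\mathbf M}_F$, $\tilde{\mathbf S}=\tilde{\mathbf S}_D+\tilde{\mathbf S}_F$. Consider the linear ODE $$\tilde{\mathbf M}_D\dot{\tilde{\mathbf x}}+\tilde{\mathbf S}_D\tilde{\mathbf x}+\tilde{\mathbf M}_F\dot{\tilde{\mathbf x}}+\tilde{\mathbf S}_F\tilde{\mathbf x}=\tilde{\mathbf u}(t)$$ and its "hybrid Euler" time discretization with step $\delta>0$ on an interval starting at time $t_q$: $$\tilde{\mathbf M}_D\frac{\tilde{\mathbf x}_{q,\ell+1}-\tilde{\mathbf x}_{q,\ell}}{\delta}+\tilde{\mathbf S}_D\tilde{\mathbf x}_{q,\ell+1}+\tilde{\mathbf M}_F\frac{\tilde{\mathbf x}_{q,\ell}-\tilde{\mathbf x}_{q,\ell-1}}{\delta}+\tilde{\mathbf S}_F\tilde{\mathbf x}_{q,\ell}=\tilde{\mathbf u}(t_q+(\ell+1)\delta),\quad \ell=0,1,\dots,$$ initialized by $\tilde{\mathbf x}_{q,0}=\tilde{\mathbf x}_{q,-1}=\tilde{\mathbf x}(t_q)$. Then this scheme is consistent with local truncation error of order $1$, i.e., for every smooth function $\boldsymbol\xi$ and every $t$, with $\mathcal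 D(\boldsymbol\xi,t)=\tilde{\mathbf M}\dot{\boldsymbol\xi}(t)+\tilde{\mathbf S}\boldsymbol\xi(t)$ and $$\mathcal D_\delta(\boldsymbol\xi,t)=\tilde{\mathbf M}_D\frac{\boldsymbol\xi(t+\delta)-\boldsymbol\xi(t)}{\delta}+\tilde{\mathbf S}_D\boldsymbol\xi(t+\delta)+\tilde{\mathbf M}_F\frac{\boldsymbol\xi(t)-\boldsymbol\xi(t-\delta)}{\delta}+\tilde{\mathbf S}_F\boldsymbol\xi(t),$$ one has $\mathcal D_\delta(\boldsymbol\xi,t)-\mathcal D(\boldsymbol\xi,t)=O(\delta)$ as $\delta\to0$. Further, the scheme is zero-stable provided that $\rho(\tilde{\mathbf M}_D^{-1}\tilde{\mathbf M}_F)<1$, where $\rho(\cdot)$ denotes the spectral radius.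
   Context: Origin of the matrices: a scalar field obeying a linear PDE $\partial x/\partial t+\mathcal A(x)=f$ on a bounded domain $\Omega$ is discretized by finite elements with basis functions $\phi_1,\dots,\phi_n$, giving $\mathbf M\dot{\mathbf x}+\mathbf S\mathbf x=\mathbf u$ with positive definite mass matrix $\mathbf M=\int_\Omega\boldsymbol\phi\boldsymbol\phi^T$ and stiffness matrix $\mathbf S$. The domain is decomposed into overlapping subdomains $\Omega_1,\dots,\Omega_N$; $\mathbf x^m$ collects the FE coefficients of vertices internal to $\Omega_m$ (or on $\partial\Omega\cap\partial\Omega_m$), and the augmented state is $\tilde{\mathbf x}=\mathrm{col}\{\mathbf x^1,\dots,\mathbf x^N\}$ (with repeated components due to overlap). The rows of the FE system for $\mathbf x^m$ read $\mathbf M^{mm}\dot{\mathbf x}^m+\sum_{j\ne m}\mathbf M^{mj}\dot{\mathbf x}^j+\mathbf S^{mm}\mathbf x^m+\sum_{j\ne m}\mathbf S^{mj}\mathbf x^j=\mathbf u^m$, where $\mathbf M^{mm},\mathbf S^{mm}$ are positive definite; then $\tilde{\mathbf M}_D=\mathrm{blockdiag}(\mathbf M^{11},\dots,\mathbf M^{NN})$, $\tilde{\mathbf S}_D=\mathrm{blockdiag}(\mathbf S^{11},\dots,\mathbf S^{NN})$, and $\tilde{\mathbf M}_F,\tilde{\mathbf S}_F$ collect the coupling blocks $\mathbf M^{mj},\mathbf S^{mj}$. Zero-stability is meant in the standard sense of the numerical analysis of multistep time-discretization schemes (stability of the limiting recursion $\tilde{\mathbf M}_D(\tilde{\mathbf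 x}_{\ell+1}-\tilde{\mathbf x}_\ell)+\tilde{\mathbf M}_F(\tilde{\mathbf x}_\ell-\tilde{\mathbf x}_{\ell-1})=0$ obtained as $\delta\to0$). *)

theory Defs
  imports "HOL-Analysis.Analysis" "HOL-Library.Landau_Symbols"
begin

definition pos_def_mat :: "real^'n^'n \<Rightarrow> bool" where
  "pos_def_mat A \<longleftrightarrow> (\<forall>x::real^'n. x \<noteq> 0 \<longrightarrow> x \<bullet> (A *v x) > 0)"

definition block_diag :: "('n \<Rightarrow> nat) \<Rightarrow> real^'n^'n \<Rightarrow> bool" where
  "block_diag blk A \<longleftrightarrow> (\<forall>i j. blk i \<noteq> blk j \<longrightarrow> A $ i $ j = 0)"

definition cmat :: "real^'n^'n \<Rightarrow> complex^'n^'n" where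
  "cmat A = (\<chi> i j. complex_of_real (A $ i $ j))"

definition eigenvalues :: "real^'n^'n \<Rightarrow> complex set" where
  "eigenvalues A = {c. \<exists>v::complex^'n. v \<noteq> 0 \<and> cmat A *v v = c *s v}"

definition spectral_radius :: "real^'n^'n \<Rightarrow> real" where
  "spectral_radius A = Sup (cmod ` eigenvalues A)"

definition smooth_fun :: "(real \<Rightarrow> 'a::real_normed_vector) \<Rightarrow> bool" where
  "smooth_fun f \<longleftrightarrow> (\<exists>D :: nat \<Rightarrow> real \<Rightarrow> 'a. D 0 = f \<and>
      (\<forall>k t. (D k has_vector_derivative D (Suc k) t) (at t)))"

definition cont_op :: "real^'n^'n \<Rightarrow> real^'n^'n \<Rightarrow> (real \<Rightarrow> real^'n) \<Rightarrow> real \<Rightarrow> real^'n" where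
  "cont_op M S \<xi> t = M *v vector_derivative \<xi> (at t) + S *v \<xi> t"

definition hybrid_op :: "real^'n^'n \<Rightarrow> real^'n^'n \<Rightarrow> real^'n^'n \<Rightarrow> real^'n^'n \<Rightarrow>
    (real \<Rightarrow> real^'n) \<Rightarrow> real \<Rightarrow> real \<Rightarrow> real^'n" where
  "hybrid_op MD SD MF SF \<xi> \<delta> t =
      MD *v ((1/\<delta>) *\<^sub>R (\<xi> (t + \<delta>) - \<xi> t)) + SD *v \<xi> (t + \<delta>)
    + MF *v ((1/\<delta>) *\<^sub>R (\<xi> t - \<xi> (t - \<delta>))) + SF *v \<xi> t"

text \<open>Zero-stability: all solutions of the limiting recursion
  MD (x_{l+1} - x_l) + MF (x_l - x_{l-1}) = 0 are uniformly bounded by their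
  initial data.  Here y k stands for x_{k-1}, so y 0 = x_{-1}, y 1 = x_0.\<close>
definition zero_stable :: "real^'n^'n \<Rightarrow> real^'n^'n \<Rightarrow> bool" where
  "zero_stable MD MF \<longleftrightarrow> (\<exists>C. \<forall>y :: nat \<Rightarrow> real^'n.
     (\<forall>l. MD *v (y (l+2) - y (l+1)) + MF *v (y (l+1) - y l) = 0) \<longrightarrow>
     (\<forall>l. norm (y l) \<le> C * (norm (y 0) + norm (y 1))))"

end

theory Submission
  imports Defs "Jordan_Normal_Form.Spectral_Radius"
begin

text \<open>
  Consistency: the defect of the scheme splits as MD q(delta) + SD (xi(t + delta) - xi(t)) +
  MF q(-delta), where q(h) is the error of the difference quotient of xi with step h; for smooth xi
  a second-order Taylor bound makes each term O(delta).

  Zero stability: the increments d_l = x_(l+1) - x_l of the limiting recursion satisfy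
  d_(l+1) = -A d_l with A = MD^-1 MF. Since the spectral radius of A is below some r < 1, the
  Jordan normal form bounds the powers of A/r, so the increments decay geometrically and the
  telescoping sums x_l stay bounded by the initial data.
\<close>

hide_const (open) Spectral_Radius.spectral_radius
no_notation Matrix.vec_index (infixl "$" 100)

lemma first_order_remainder_bound:
  fixes f :: "real \<Rightarrow> 'a::real_normed_vector"
  assumes f: "\<And>s. s \<in> closed_segment t (t + h) \<Longrightarrow> (f has_vector_derivative f' s) (at s)"
    and f': "\<And>s. s \<in> closed_segment t (t + h) \<Longrightarrow> (f' has_vector_derivative f'' s) (at s)"
    and f'': "\<And>s. s \<in> closed_segment t (t + h) \<Longrightarrow> norm (f'' s) \<le> B"
  shows "norm (f (t + h) - f t - h *\<^sub>R f' t) \<le> B * h\<^sup>2"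
proof -
  let ?S = "closed_segment t (t + h)"
  have f'_lipschitz: "norm (f' s - f' t) \<le> B * \<bar>h\<bar>" if s: "s \<in> ?S" for s
  proof -
    have "norm (f' s - f' t) \<le> B * norm (s - t)"
    proof (rule differentiable_bound[where f' = "\<lambda>x u. u *\<^sub>R f'' x"])
      show "(f' has_derivative (\<lambda>u. u *\<^sub>R f'' x)) (at x within ?S)" if "x \<in> ?S" for x
        using f'[OF that] by (simp add: has_vector_derivative_def has_derivative_at_withinI)
      show "onorm (\<lambda>u. u *\<^sub>R f'' x) \<le> B" if "x \<in> ?S" for x
        using f''[OF that] by (simp add: onorm_scaleR_left[OF bounded_linear_ident] onorm_id)
    qed (use s in auto)
    also have "\<dots> \<le> B * \<bar>h\<bar>"
      using dist_in_closed_segment[OF s] order_trans[OF norm_ge_zero f''[OF s]]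
      by (intro mult_left_mono) (auto simp: dist_real_def)
    finally show ?thesis .
  qed
  have "norm (f (t + h) - f t - (t + h - t) *\<^sub>R f' t) \<le> norm (t + h - t) * (B * \<bar>h\<bar>)"
    by (rule vector_differentiable_bound_linearization[where S = ?S])
      (use f f'_lipschitz in \<open>auto intro: has_vector_derivative_at_within\<close>)
  thus ?thesis by (simp add: power2_eq_square mult.commute mult.left_commute)
qed

lemma smooth_fun_difference_quotient_bound:
  fixes \<xi> :: "real \<Rightarrow> 'a::real_normed_vector"
  assumes "smooth_fun \<xi>"
  obtains K where "\<And>h. h \<noteq> 0 \<Longrightarrow> \<bar>h\<bar> \<le> 1 \<Longrightarrow>
    norm ((1 / h) *\<^sub>R (\<xi> (t + h) - \<xi> t) - vector_derivative \<xi> (at t)) \<le> K * \<bar>h\<bar>"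
proof -
  obtain D where D0: "D 0 = \<xi>" and D: "\<And>k s. (D k has_vector_derivative D (Suc k) s) (at s)"
    using assms unfolding smooth_fun_def by blast
  have "continuous_on (cball t 1) (D 2)"
    using D by (intro continuous_at_imp_continuous_on ballI has_vector_derivative_continuous)
  then have "bounded (D 2 ` cball t 1)"
    by (simp add: compact_imp_bounded compact_continuous_image)
  then obtain B where B: "\<And>s. s \<in> cball t 1 \<Longrightarrow> norm (D 2 s) \<le> B"
    unfolding bounded_iff by blast
  have derivative: "vector_derivative \<xi> (at t) = D 1 t"
    using D[of 0 t] D0 by (simp add: vector_derivative_at)
  show thesis
  proof
    fix h :: real assume h: "h \<noteq> 0" "\<bar>h\<bar> \<le> 1"
    have segment: "closed_segment t (t + h) \<subseteq> cball t 1"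
      using h by (intro closed_segment_subset) (auto simp: dist_real_def)
    have "norm (\<xi> (t + h) - \<xi> t - h *\<^sub>R D 1 t) \<le> B * h\<^sup>2"
      unfolding D0[symmetric]
      by (rule first_order_remainder_bound) (use D B segment in \<open>auto simp: numeral_2_eq_2\<close>)
    moreover have "(1 / h) *\<^sub>R (\<xi> (t + h) - \<xi> t) - D 1 t = (1 / h) *\<^sub>R (\<xi> (t + h) - \<xi> t - h *\<^sub>R D 1 t)"
      using h by (simp add: algebra_simps)
    ultimately show "norm ((1 / h) *\<^sub>R (\<xi> (t + h) - \<xi> t) - vector_derivative \<xi> (at t)) \<le> B * \<bar>h\<bar>"
      using h by (simp add: derivative divide_simps power2_eq_square)
  qed
qed

text \<open>The backward difference quotient is the forward one with step -delta.\<close>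

lemma hybrid_op_minus_cont_op:
  fixes \<xi> :: "real \<Rightarrow> real^'n" and t :: real
  defines "q \<equiv> \<lambda>h. (1 / h) *\<^sub>R (\<xi> (t + h) - \<xi> t) - vector_derivative \<xi> (at t)"
  shows "hybrid_op MD SD MF SF \<xi> \<delta> t - cont_op (MD + MF) (SD + SF) \<xi> t
    = MD *v q \<delta> + SD *v (\<xi> (t + \<delta>) - \<xi> t) + MF *v q (- \<delta>)"
  unfolding hybrid_op_def cont_op_def q_def
  by (simp add: algebra_simps)

lemma bigo_norm_add:
  fixes f g :: "'a \<Rightarrow> 'b::real_normed_vector"
  assumes "(\<lambda>x. norm (f x)) \<in> O[F](h)" "(\<lambda>x. norm (g x)) \<in> O[F](h)"
  shows "(\<lambda>x. norm (f x + g x)) \<in> O[F](h)"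
proof -
  have "(\<lambda>x. norm (f x + g x)) \<in> O[F](\<lambda>x. norm (f x) + norm (g x))"
    by (intro landau_o.big_mono always_eventually allI) (simp add: norm_triangle_ineq)
  also have "(\<lambda>x. norm (f x) + norm (g x)) \<in> O[F](h)"
    using assms by (rule sum_in_bigo)
  finally show ?thesis .
qed

lemma bigo_norm_matrix_vector_mult:
  fixes A :: "real^'n^'m"
  assumes "(\<lambda>x. norm (g x)) \<in> O[F](h)"
  shows "(\<lambda>x. norm (A *v g x)) \<in> O[F](h)"
proof -
  obtain K where "\<And>v. norm (A *v v) \<le> norm v * K"
    using bounded_linear.bounded[OF matrix_vector_mul_bounded_linear] by blast
  then have "(\<lambda>x. norm (A *v g x)) \<in> O[F](\<lambda>x. norm (g x))"
    by (intro bigoI[where c = K] always_eventually allI) (simp add: mult.commute)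
  also note assms
  finally show ?thesis .
qed

lemma hybrid_op_consistent:
  fixes \<xi> :: "real \<Rightarrow> real^'n"
  assumes "smooth_fun \<xi>"
  shows "(\<lambda>\<delta>. norm (hybrid_op MD SD MF SF \<xi> \<delta> t - cont_op (MD + MF) (SD + SF) \<xi> t))
    \<in> O[at_right 0](\<lambda>\<delta>. \<delta>)"
proof -
  define v where "v = vector_derivative \<xi> (at t)"
  define q where "q h = (1 / h) *\<^sub>R (\<xi> (t + h) - \<xi> t) - v" for h
  obtain K where K: "\<And>h. h \<noteq> 0 \<Longrightarrow> \<bar>h\<bar> \<le> 1 \<Longrightarrow> norm (q h) \<le> K * \<bar>h\<bar>"
    using smooth_fun_difference_quotient_bound[OF assms] unfolding q_def v_def by blast
  have small: "\<forall>\<^sub>F \<delta> in at_right 0. 0 < \<delta> \<and> \<delta> \<le> (1::real)"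
    using eventually_at_right_real[of 0 "1::real"] by (rule eventually_mono) auto
  have K_forward: "norm (q \<delta>) \<le> K * \<delta>" and K_backward: "norm (q (- \<delta>)) \<le> K * \<delta>"
    if "0 < \<delta>" "\<delta> \<le> 1" for \<delta>
    using K[of \<delta>] K[of "- \<delta>"] that by auto
  have forward: "(\<lambda>\<delta>. norm (q \<delta>)) \<in> O[at_right 0](\<lambda>\<delta>. \<delta>)"
    by (rule bigoI[where c = K], rule eventually_mono[OF small]) (auto simp: K_forward)
  have backward: "(\<lambda>\<delta>. norm (q (- \<delta>))) \<in> O[at_right 0](\<lambda>\<delta>. \<delta>)"
    by (rule bigoI[where c = K], rule eventually_mono[OF small]) (auto simp: K_backward)
  have increment: "(\<lambda>\<delta>. norm (\<xi> (t + \<delta>) - \<xi> t)) \<in> O[at_right 0](\<lambda>\<delta>. \<delta>)"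
  proof (intro bigoI[where c = "K + norm v"])
    show "\<forall>\<^sub>F \<delta> in at_right 0. norm (norm (\<xi> (t + \<delta>) - \<xi> t)) \<le> (K + norm v) * norm \<delta>"
      using small
    proof eventually_elim
      case (elim \<delta>)
      have "\<xi> (t + \<delta>) - \<xi> t = \<delta> *\<^sub>R (q \<delta> + v)"
        using elim by (simp add: q_def)
      then have "norm (\<xi> (t + \<delta>) - \<xi> t) \<le> \<delta> * (K * \<delta> + norm v)"
        using elim K_forward[of \<delta>] by (auto intro!: mult_left_mono order_trans[OF norm_triangle_ineq])
      also have "\<dots> \<le> \<delta> * (K + norm v)"
        using elim order_trans[OF norm_ge_zero K_forward[of \<delta>]]
        by (intro mult_left_mono add_right_mono) (auto simp: zero_le_mult_iff intro: mult_left_le)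
      finally show ?case using elim by (simp add: mult.commute)
    qed
  qed
  show ?thesis
    unfolding hybrid_op_minus_cont_op v_def[symmetric] q_def[symmetric, abs_def]
    by (intro bigo_norm_add bigo_norm_matrix_vector_mult forward backward increment)
qed

text \<open>
  To use the power bounds of Jordan_Normal_Form, matrices indexed by a finite type are transported
  to its matrices over {0..<CARD('n)} along a fixed enumeration of the index type.
\<close>

definition cart_index :: "'n::finite \<Rightarrow> nat" where
  "cart_index = (SOME f. bij_betw f UNIV {..<CARD('n)})"

definition cart_enum :: "nat \<Rightarrow> 'n::finite" where
  "cart_enum = inv_into UNIV cart_index"

definition vec_of_cart :: "'a^'n::finite \<Rightarrow> 'a Matrix.vec" where
  "vec_of_cart v = Matrix.vec CARD('n) (\<lambda>i. v $ cart_enum i)"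

definition mat_of_cart :: "'a^'n::finite^'n \<Rightarrow> 'a Matrix.mat" where
  "mat_of_cart A = Matrix.mat CARD('n) CARD('n) (\<lambda>(i, j). A $ cart_enum i $ cart_enum j)"

lemma bij_cart_index: "bij_betw (cart_index :: 'n::finite \<Rightarrow> nat) UNIV {..<CARD('n)}"
proof -
  obtain f :: "'n \<Rightarrow> nat" where "bij_betw f UNIV {0..<CARD('n)}"
    using ex_bij_betw_finite_nat[of "UNIV :: 'n set"] by auto
  then have "bij_betw f UNIV {..<CARD('n)}"
    by (simp add: atLeast0LessThan)
  then show ?thesis
    unfolding cart_index_def by (rule someI[where P = "\<lambda>f. bij_betw f UNIV {..<CARD('n)}"])
qed

lemma cart_index_less [simp]: "cart_index (k :: 'n::finite) < CARD('n)"
  using bij_cart_index by (auto simp: bij_betw_def)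

lemma cart_enum_cart_index [simp]: "cart_enum (cart_index (k :: 'n::finite)) = k"
  unfolding cart_enum_def using bij_cart_index by (metis bij_betw_inv_into_left UNIV_I)

lemma cart_index_cart_enum [simp]: "i < CARD('n::finite) \<Longrightarrow> cart_index (cart_enum i :: 'n) = i"
  unfolding cart_enum_def using bij_cart_index by (metis bij_betw_inv_into_right lessThan_iff)

lemma sum_cart_enum: "(\<Sum>i<CARD('n::finite). g (cart_enum i :: 'n)) = (\<Sum>k\<in>UNIV. g k)"
  using bij_betw_inv_into[OF bij_cart_index] unfolding cart_enum_def[symmetric]
  by (rule sum.reindex_bij_betw)

lemma vec_of_cart_carrier [simp]: "vec_of_cart (v :: 'a^'n::finite) \<in> carrier_vec CARD('n)"
  by (simp add: vec_of_cart_def)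

lemma mat_of_cart_carrier [simp]:
  "mat_of_cart (A :: 'a^'n::finite^'n) \<in> carrier_mat CARD('n) CARD('n)"
  by (simp add: mat_of_cart_def)

lemma dim_row_mat_of_cart [simp]: "dim_row (mat_of_cart (A :: 'a^'n::finite^'n)) = CARD('n)"
  by (simp add: mat_of_cart_def)

lemma vec_index_vec_of_cart [simp]: "vec_index (vec_of_cart v) (cart_index k) = v $ k"
  by (simp add: vec_of_cart_def)

lemma vec_of_cart_inject: "vec_of_cart x = vec_of_cart y \<longleftrightarrow> x = y"
  by (metis vec_index_vec_of_cart Finite_Cartesian_Product.vec_eq_iff)

lemma vec_of_cart_zero: "vec_of_cart (0 :: 'a::zero^'n::finite) = 0\<^sub>v CARD('n)"
  by (rule eq_vecI) (simp_all add: vec_of_cart_def)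

lemma vec_of_cart_smult: "vec_of_cart (c *s v) = c \<cdot>\<^sub>v vec_of_cart v"
  by (rule eq_vecI) (simp_all add: vec_of_cart_def)

lemma vec_of_cart_cases:
  fixes w :: "'a Matrix.vec"
  assumes "w \<in> carrier_vec CARD('n::finite)"
  obtains v :: "'a^'n" where "w = vec_of_cart v"
proof
  show "w = vec_of_cart (\<chi> k. vec_index w (cart_index k) :: 'a^'n)"
    using assms by (intro eq_vecI) (auto simp: vec_of_cart_def)
qed

lemma mat_of_cart_mult_vec_of_cart:
  fixes A :: "'a::comm_semiring_1^'n::finite^'n"
  shows "mat_of_cart A *\<^sub>v vec_of_cart v = vec_of_cart (A *v v)"
proof (rule eq_vecI)
  fix i assume "i < dim_vec (vec_of_cart (A *v v))"
  then have i: "i < CARD('n)" by (simp add: vec_of_cart_def)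
  have "vec_index (mat_of_cart A *\<^sub>v vec_of_cart v) i
      = (\<Sum>j<CARD('n). A $ cart_enum i $ cart_enum j * v $ cart_enum j)"
    using i by (simp add: mat_of_cart_def vec_of_cart_def scalar_prod_def Matrix.row_def
        atLeast0LessThan)
  also have "\<dots> = (A *v v) $ cart_enum i"
    using sum_cart_enum[of "\<lambda>j. A $ cart_enum i $ j * v $ j"] by (simp add: matrix_vector_mult_def)
  finally show "vec_index (mat_of_cart A *\<^sub>v vec_of_cart v) i = vec_index (vec_of_cart (A *v v)) i"
    using i by (simp add: vec_of_cart_def)
qed (simp add: mat_of_cart_def vec_of_cart_def)

lemma eigenvalues_eq_spectrum:
  fixes A :: "real^'n::finite^'n"
  shows "eigenvalues A = spectrum (mat_of_cart (cmat A))"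
proof -
  have "c \<in> eigenvalues A \<longleftrightarrow> eigenvalue (mat_of_cart (cmat A)) c" for c
  proof
    assume "c \<in> eigenvalues A"
    then obtain v where "v \<noteq> 0" "cmat A *v v = c *s v"
      unfolding eigenvalues_def by blast
    then show "eigenvalue (mat_of_cart (cmat A)) c"
      unfolding eigenvalue_def eigenvector_def
      by (intro exI[of _ "vec_of_cart v"])
        (simp add: mat_of_cart_mult_vec_of_cart vec_of_cart_smult vec_of_cart_inject
          flip: vec_of_cart_zero)
  next
    assume "eigenvalue (mat_of_cart (cmat A)) c"
    then obtain w where w: "w \<in> carrier_vec CARD('n)" "w \<noteq> 0\<^sub>v CARD('n)"
      "mat_of_cart (cmat A) *\<^sub>v w = c \<cdot>\<^sub>v w"
      unfolding eigenvalue_def eigenvector_def by auto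
    obtain v :: "complex^'n" where v: "w = vec_of_cart v"
      using vec_of_cart_cases[OF w(1)] .
    have "v \<noteq> 0" "cmat A *v v = c *s v"
      using w(2,3) unfolding v
      by (simp_all add: mat_of_cart_mult_vec_of_cart vec_of_cart_inject
          flip: vec_of_cart_zero vec_of_cart_smult)
    then show "c \<in> eigenvalues A"
      unfolding eigenvalues_def by blast
  qed
  then show ?thesis
    by (auto simp: spectrum_def)
qed

lemma finite_eigenvalues: "finite (eigenvalues (A :: real^'n::finite^'n))"
  using card_finite_spectrum(1)[OF mat_of_cart_carrier] by (simp add: eigenvalues_eq_spectrum)

lemma eigenvalues_nonempty: "eigenvalues (A :: real^'n::finite^'n) \<noteq> {}"
  using spectrum_non_empty[OF mat_of_cart_carrier] by (simp add: eigenvalues_eq_spectrum)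

lemma spectral_radius_eq_Max: "spectral_radius A = Max (cmod ` eigenvalues A)"
  unfolding Defs.spectral_radius_def
  using finite_eigenvalues[of A] eigenvalues_nonempty[of A] by (simp add: cSup_eq_Max)

lemma spectral_radius_mat_of_cart:
  "Spectral_Radius.spectral_radius (mat_of_cart (cmat A)) = spectral_radius A"
  by (simp add: Spectral_Radius.spectral_radius_def spectral_radius_eq_Max eigenvalues_eq_spectrum)

lemma eigenvalue_le_spectral_radius: "c \<in> eigenvalues A \<Longrightarrow> cmod c \<le> spectral_radius A"
  unfolding spectral_radius_eq_Max using finite_eigenvalues[of A] by simp

lemma spectral_radius_attained:
  obtains c where "c \<in> eigenvalues A" "spectral_radius A = cmod c"
  using Max_in[of "cmod ` eigenvalues A"] finite_eigenvalues[of A] eigenvalues_nonempty[of A]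
  unfolding spectral_radius_eq_Max by blast

lemma of_real_mult_mem_eigenvalues:
  assumes "c \<in> eigenvalues A"
  shows "of_real r * c \<in> eigenvalues (r *\<^sub>R A)"
proof -
  obtain v where v: "v \<noteq> 0" "cmat A *v v = c *s v"
    using assms unfolding eigenvalues_def by blast
  have "cmat (r *\<^sub>R A) *v v = of_real r *s (cmat A *v v)"
    by (simp add: Finite_Cartesian_Product.vec_eq_iff cmat_def matrix_vector_mult_def
        sum_distrib_left mult.assoc)
  then show ?thesis
    using v unfolding eigenvalues_def by auto
qed

lemma spectral_radius_scaleR:
  assumes "r \<noteq> 0"
  shows "spectral_radius (r *\<^sub>R A) = \<bar>r\<bar> * spectral_radius A"
proof (rule antisym)
  obtain c where c: "c \<in> eigenvalues (r *\<^sub>R A)" "spectral_radius (r *\<^sub>R A) = cmod c"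
    using spectral_radius_attained .
  have "of_real (1 / r) * c \<in> eigenvalues A"
    using of_real_mult_mem_eigenvalues[OF c(1), of "1 / r"] assms by simp
  from eigenvalue_le_spectral_radius[OF this]
  have "cmod c / \<bar>r\<bar> \<le> spectral_radius A"
    by (simp add: norm_mult norm_divide)
  then show "spectral_radius (r *\<^sub>R A) \<le> \<bar>r\<bar> * spectral_radius A"
    using assms c(2) by (simp add: field_simps)
next
  obtain c where c: "c \<in> eigenvalues A" "spectral_radius A = cmod c"
    using spectral_radius_attained .
  show "\<bar>r\<bar> * spectral_radius A \<le> spectral_radius (r *\<^sub>R A)"
    using eigenvalue_le_spectral_radius[OF of_real_mult_mem_eigenvalues[OF c(1)]] c(2)
    by (simp add: norm_mult)
qed

lemma spectral_radius_nonneg: "0 \<le> spectral_radius A"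
  by (metis spectral_radius_attained norm_ge_zero)

definition cvec :: "real^'n \<Rightarrow> complex^'n" where
  "cvec v = (\<chi> i. complex_of_real (v $ i))"

lemma cmat_mult_cvec: "cmat A *v cvec v = cvec (A *v v)"
  by (simp add: Finite_Cartesian_Product.vec_eq_iff cmat_def cvec_def matrix_vector_mult_def)

lemma sum_cmod_vec_of_cart_cvec:
  "(\<Sum>i<CARD('n::finite). cmod (vec_index (vec_of_cart (cvec v)) i)) = (\<Sum>k\<in>UNIV. \<bar>v $ (k :: 'n)\<bar>)"
  using sum_cart_enum[of "\<lambda>k. \<bar>v $ k\<bar>"] by (simp add: vec_of_cart_def cvec_def)

lemma sum_abs_le_card_mult_norm: "(\<Sum>k\<in>UNIV. \<bar>v $ (k :: 'n::finite)\<bar>) \<le> CARD('n) * norm v"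
  using sum_bounded_above[of UNIV "\<lambda>k. \<bar>v $ k\<bar>" "norm v"] by (simp add: component_le_norm_cart)

lemma norm_bound_mult_mat_vec:
  fixes P :: "'a::{real_normed_field} mat"
  assumes "P \<in> carrier_mat n n" "norm_bound P c" "w \<in> carrier_vec n"
  shows "(\<Sum>i<n. norm (vec_index (P *\<^sub>v w) i)) \<le> n * c * (\<Sum>j<n. norm (vec_index w j))"
proof -
  have "norm (vec_index (P *\<^sub>v w) i) \<le> c * (\<Sum>j<n. norm (vec_index w j))" if i: "i < n" for i
  proof -
    have "norm (vec_index (P *\<^sub>v w) i) \<le> (\<Sum>j<n. norm (P $$ (i, j)) * norm (vec_index w j))"
      using assms i
      by (auto simp: scalar_prod_def Matrix.row_def atLeast0LessThan norm_mult
          intro: order_trans[OF norm_sum])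
    also have "\<dots> \<le> (\<Sum>j<n. c * norm (vec_index w j))"
      using assms i unfolding norm_bound_def by (intro sum_mono mult_right_mono) auto
    finally show ?thesis
      by (simp add: sum_distrib_left)
  qed
  then have "(\<Sum>i<n. norm (vec_index (P *\<^sub>v w) i)) \<le> (\<Sum>i<n. c * (\<Sum>j<n. norm (vec_index w j)))"
    by (intro sum_mono) simp
  then show ?thesis
    by simp
qed

lemma funpow_matrix_vector_mult_scaleR:
  fixes A :: "real^'n::finite^'n"
  shows "((*v) (r *\<^sub>R A) ^^ k) x = r ^ k *\<^sub>R ((*v) A ^^ k) x"
  by (induction k) (simp_all add: matrix_vector_mult_scaleR flip: scaleR_matrix_vector_assoc)

lemma vec_of_cart_cvec_funpow:
  "vec_of_cart (cvec (((*v) A ^^ k) x)) = mat_of_cart (cmat A) ^\<^sub>m k *\<^sub>v vec_of_cart (cvec x)"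
proof (induction k arbitrary: x)
  case 0
  then show ?case
    by simp
next
  case (Suc k)
  have "vec_of_cart (cvec (((*v) A ^^ Suc k) x)) = vec_of_cart (cvec (((*v) A ^^ k) (A *v x)))"
    by (simp add: funpow_Suc_right del: funpow.simps)
  also have "\<dots> = mat_of_cart (cmat A) ^\<^sub>m k *\<^sub>v (mat_of_cart (cmat A) *\<^sub>v vec_of_cart (cvec x))"
    by (simp add: Suc mat_of_cart_mult_vec_of_cart cmat_mult_cvec)
  also have "\<dots> = mat_of_cart (cmat A) ^\<^sub>m Suc k *\<^sub>v vec_of_cart (cvec x)"
    by (simp add: assoc_mult_mat_vec[OF pow_carrier_mat[OF mat_of_cart_carrier] mat_of_cart_carrier
          vec_of_cart_carrier])
  finally show ?case .
qed

lemma spectral_radius_less_1_funpow_bounded: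
  fixes A :: "real^'n::finite^'n"
  assumes "spectral_radius A < 1"
  obtains C where "0 \<le> C" "\<And>k x. norm (((*v) A ^^ k) x) \<le> C * norm x"
proof -
  let ?M = "mat_of_cart (cmat A)"
  let ?N = "real CARD('n)"
  obtain c where "\<And>k. norm_bound (?M ^\<^sub>m k) c"
    using spectral_radius_jnf_norm_bound_less_1_upper_triangular[OF mat_of_cart_carrier]
      assms spectral_radius_mat_of_cart by metis
  then have c: "\<And>k. norm_bound (?M ^\<^sub>m k) (max c 0)"
    unfolding norm_bound_def by (meson max.coboundedI1)
  show thesis
  proof
    fix k x
    have "norm (((*v) A ^^ k) x) \<le> (\<Sum>i\<in>UNIV. \<bar>((*v) A ^^ k) x $ i\<bar>)"
      by (rule norm_le_l1_cart)
    also have "\<dots> = (\<Sum>i<CARD('n). cmod (vec_index (?M ^\<^sub>m k *\<^sub>v vec_of_cart (cvec x)) i))"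
      by (simp only: sum_cmod_vec_of_cart_cvec flip: vec_of_cart_cvec_funpow)
    also have "\<dots> \<le> ?N * max c 0 * (\<Sum>j<CARD('n). cmod (vec_index (vec_of_cart (cvec x)) j))"
      by (rule norm_bound_mult_mat_vec[OF pow_carrier_mat[OF mat_of_cart_carrier] c vec_of_cart_carrier])
    also have "\<dots> = ?N * max c 0 * (\<Sum>i\<in>UNIV. \<bar>x $ i\<bar>)"
      by (simp only: sum_cmod_vec_of_cart_cvec)
    also have "\<dots> \<le> ?N * max c 0 * (?N * norm x)"
      by (intro mult_left_mono sum_abs_le_card_mult_norm) simp
    finally show "norm (((*v) A ^^ k) x) \<le> ?N * max c 0 * ?N * norm x"
      by (simp add: mult.assoc)
  qed simp
qed

lemma spectral_radius_less_1_funpow_decay: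
  fixes A :: "real^'n::finite^'n"
  assumes "spectral_radius A < 1"
  obtains C r where "0 \<le> C" "0 < r" "r < 1" "\<And>k x. norm (((*v) A ^^ k) x) \<le> C * r ^ k * norm x"
proof -
  define r where "r = (1 + spectral_radius A) / 2"
  have r: "0 < r" "r < 1" "spectral_radius A < r"
    using assms spectral_radius_nonneg[of A] by (simp_all add: r_def)
  have "spectral_radius ((1 / r) *\<^sub>R A) < 1"
    using r by (simp add: spectral_radius_scaleR)
  then obtain C where C: "0 \<le> C" "\<And>k x. norm (((*v) ((1 / r) *\<^sub>R A) ^^ k) x) \<le> C * norm x"
    using spectral_radius_less_1_funpow_bounded by blast
  show thesis
  proof (rule that[OF C(1) r(1,2)])
    fix k x
    have "((*v) A ^^ k) x = r ^ k *\<^sub>R ((*v) ((1 / r) *\<^sub>R A) ^^ k) x"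
      using r(1) by (simp add: funpow_matrix_vector_mult_scaleR power_one_over)
    then show "norm (((*v) A ^^ k) x) \<le> C * r ^ k * norm x"
      using C(2)[of k x] r(1) by (simp add: mult_left_mono mult.left_commute)
  qed
qed

lemma bounded_if_increments_decay:
  fixes y :: "nat \<Rightarrow> 'a::real_normed_vector"
  assumes "0 \<le> C" "0 \<le> r" "r < 1"
    and decay: "\<And>k. norm (y (Suc k) - y k) \<le> C * r ^ k * norm (y 1 - y 0)"
  shows "norm (y l) \<le> (1 + C / (1 - r)) * (norm (y 0) + norm (y 1))"
proof -
  have geometric: "(\<Sum>k<l. r ^ k) \<le> 1 / (1 - r)"
    using assms by (simp add: sum_gp_strict divide_right_mono)
  have "norm (\<Sum>k<l. y (Suc k) - y k) \<le> (\<Sum>k<l. C * norm (y 1 - y 0) * r ^ k)"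
    using decay by (intro order_trans[OF norm_sum] sum_mono) (simp add: mult_ac)
  also have "\<dots> \<le> C * norm (y 1 - y 0) * (1 / (1 - r))"
    unfolding sum_distrib_left[symmetric] using assms by (intro mult_left_mono geometric) simp
  also have "\<dots> \<le> C * (norm (y 0) + norm (y 1)) * (1 / (1 - r))"
    using assms norm_triangle_ineq4[of "y 1" "y 0"]
    by (intro mult_right_mono mult_left_mono) (simp_all add: add.commute)
  finally have sum_bound: "norm (\<Sum>k<l. y (Suc k) - y k) \<le> C / (1 - r) * (norm (y 0) + norm (y 1))"
    by simp
  have "y l = y 0 + (\<Sum>k<l. y (Suc k) - y k)"
    by (induction l) simp_all
  then have "norm (y l) \<le> norm (y 0) + norm (\<Sum>k<l. y (Suc k) - y k)"
    by (metis norm_triangle_ineq)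
  also have "\<dots> \<le> norm (y 0) + norm (y 1) + C / (1 - r) * (norm (y 0) + norm (y 1))"
    using sum_bound norm_ge_zero[of "y 1"] by linarith
  finally show ?thesis
    by (simp add: distrib_right)
qed

lemma pos_def_mat_invertible:
  assumes "pos_def_mat A"
  shows "invertible A"
proof -
  have "x = 0" if "A *v x = 0" for x
    using assms that unfolding pos_def_mat_def by (metis inner_zero_right less_irrefl)
  then show ?thesis
    by (simp add: invertible_left_inverse matrix_left_invertible_ker)
qed

lemma matrix_inv_left:
  fixes A :: "'a::field^'n^'n"
  assumes "invertible A"
  shows "matrix_inv A ** A = Finite_Cartesian_Product.mat 1"
  using someI_ex[OF assms[unfolded invertible_def]] unfolding matrix_inv_def by (rule conjunct2)

lemma matrix_vector_mult_uminus_right: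
  fixes A :: "'a::ring_1^'n^'m"
  shows "A *v (- x) = - (A *v x)"
  using matrix_vector_mult_diff_distrib[of A 0 x] by simp

lemma zero_stable_if_spectral_radius_less_1:
  assumes "invertible MD" and "spectral_radius (matrix_inv MD ** MF) < 1"
  shows "zero_stable MD MF"
proof -
  define A where "A = matrix_inv MD ** MF"
  obtain C r where C: "0 \<le> C" "0 < r" "r < 1"
    and decay: "\<And>k x. norm (((*v) A ^^ k) x) \<le> C * r ^ k * norm x"
    using spectral_radius_less_1_funpow_decay assms(2) unfolding A_def by blast
  show ?thesis
    unfolding zero_stable_def
  proof (intro exI allI impI)
    fix y :: "nat \<Rightarrow> real^'a" and l
    assume rec: "\<forall>l. MD *v (y (l + 2) - y (l + 1)) + MF *v (y (l + 1) - y l) = 0"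
    define d where "d k = y (Suc k) - y k" for k
    have d_Suc: "d (Suc k) = - (A *v d k)" for k
    proof -
      have step: "MD *v d (Suc k) = - (MF *v d k)"
        using rec[rule_format, of k] by (simp add: d_def eq_neg_iff_add_eq_0 numeral_2_eq_2)
      have "d (Suc k) = (matrix_inv MD ** MD) *v d (Suc k)"
        by (simp add: matrix_inv_left[OF assms(1)])
      also have "\<dots> = matrix_inv MD *v - (MF *v d k)"
        by (simp only: step flip: matrix_vector_mul_assoc)
      also have "\<dots> = - (A *v d k)"
        by (simp only: A_def matrix_vector_mult_uminus_right matrix_vector_mul_assoc)
      finally show ?thesis .
    qed
    have d_power: "d k = (- 1) ^ k *\<^sub>R ((*v) A ^^ k) (d 0)" for k
      by (induction k) (simp_all add: d_Suc matrix_vector_mult_scaleR)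
    have "norm (d k) \<le> C * r ^ k * norm (d 0)" for k
      using decay[of k "d 0"] unfolding d_power[of k] by simp
    then have "norm (y (Suc k) - y k) \<le> C * r ^ k * norm (y 1 - y 0)" for k
      by (simp add: d_def)
    then show "norm (y l) \<le> (1 + C / (1 - r)) * (norm (y 0) + norm (y 1))"
      by (rule bounded_if_increments_decay[OF C(1) less_imp_le[OF C(2)] C(3)])
  qed
qed

theorem theorem1:
  fixes MD SD MF SF :: "real^'n^'n" and blk :: "'n \<Rightarrow> nat"
  assumes "block_diag blk MD" and "block_diag blk SD"
    and "pos_def_mat MD" and "pos_def_mat SD"
  shows "(\<forall>(\<xi>::real \<Rightarrow> real^'n) t. smooth_fun \<xi> \<longrightarrow>
           (\<lambda>\<delta>. norm (hybrid_op MD SD MF SF \<xi> \<delta> t - cont_op (MD + MF) (SD + SF) \<xi> t))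
             \<in> O[at_right 0](\<lambda>\<delta>. \<delta>))
       \<and> (spectral_radius (matrix_inv MD ** MF) < 1 \<longrightarrow> zero_stable MD MF)"
  using hybrid_op_consistent zero_stable_if_spectral_radius_less_1[OF pos_def_mat_invertible[OF assms(3)]]
  by blast

end
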